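(* Let $F$, $X_0$, $B$, $C$ be as in the context, and let $X(t)=\sum_{p=0}^\infty X_pt^p$ be an analytic family of solutions of $F(X)=0$ with initial term $X_0$. Suppose $X_3$ and $X_4$ belong to the linear span $L$ of $X_1$ and $X_2$. Then for all $i,j\in\{1,2\}$ the linear system $CX=-B(X_i,X_j)-B(X_j,X_i)$ has a solution $X\in L$.
   Context: Let $m,n\ge 1$ and let $F=(F_1,\dots,F_n):\mathbb{R}^m\to\mathbb{R}^n$, where each component is a polynomial of degree at most 2 written as $F_k(X)=\sum_{i=1}^m\sum_{j=1}^m\alpha^k_{ij}x_ix_j+\sum_{i=1}^m\beta^k_ix_i+\gamma^k$ for $X=(x_1,\dots,x_m)$, with real coefficients and $\alpha^k_{ij}=\alpha^k_{ji}$. Fix $X_0\in\mathbb{R}^m$ with $F(X_0)=0$. Define the bilinear map $B:\mathbb{R}^m\times\mathbb{R}^m\to\mathbb{R}^n$ by $B(X,Y)_k=\sum_{i,j=1}^m\alpha^k_{ij}x_iy_j$, the linear map $A:\mathbb{R}^m\to\mathbb{R}^n$ by $(AX)_k=\sum_{i=1}^m\beta^k_ix_i$, and the linear map $C:\mathbb{R}^m\to\mathbb{R}^n$ by $CX=B(X_0,X)+B(X,X_0)+AX$. An analytic family of solutions with initial term $X_0$ is a power series $X(t)=\sum_{p=0}^\infty X_pt^p$ with $X_p\in\mathbb{R}^m$, positive radius of convergence, constant term equal to $X_0$, and $F(X(t))=0$ for all sufficiently small $t$. *)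

theory Defs
  imports "HOL-Analysis.Analysis"
begin

text \<open>Coefficients: alpha k i j, beta k i, gamma k, indexed by finite types
  'n (components of F, i.e. R^n) and 'm (variables, i.e. R^m).\<close>

definition quadF :: "('n \<Rightarrow> 'm::finite \<Rightarrow> 'm \<Rightarrow> real) \<Rightarrow> ('n \<Rightarrow> 'm \<Rightarrow> real) \<Rightarrow> ('n \<Rightarrow> real)
    \<Rightarrow> real^'m \<Rightarrow> real^'n::finite" where
  "quadF \<alpha> \<beta> \<gamma> X = (\<chi> k. (\<Sum>i\<in>UNIV. \<Sum>j\<in>UNIV. \<alpha> k i j * X$i * X$j)
                          + (\<Sum>i\<in>UNIV. \<beta> k i * X$i) + \<gamma> k)"

definition bilinB :: "('n \<Rightarrow> 'm::finite \<Rightarrow> 'm \<Rightarrow> real) \<Rightarrow> real^'m \<Rightarrow> real^'m \<Rightarrow> real^'n::finite" where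
  "bilinB \<alpha> X Y = (\<chi> k. \<Sum>i\<in>UNIV. \<Sum>j\<in>UNIV. \<alpha> k i j * X$i * Y$j)"

definition linA :: "('n \<Rightarrow> 'm::finite \<Rightarrow> real) \<Rightarrow> real^'m \<Rightarrow> real^'n::finite" where
  "linA \<beta> X = (\<chi> k. \<Sum>i\<in>UNIV. \<beta> k i * X$i)"

definition linC :: "('n \<Rightarrow> 'm::finite \<Rightarrow> 'm \<Rightarrow> real) \<Rightarrow> ('n \<Rightarrow> 'm \<Rightarrow> real) \<Rightarrow> real^'m
    \<Rightarrow> real^'m \<Rightarrow> real^'n::finite" where
  "linC \<alpha> \<beta> X0 X = bilinB \<alpha> X0 X + bilinB \<alpha> X X0 + linA \<beta> X"

definition analytic_family :: "('n \<Rightarrow> 'm::finite \<Rightarrow> 'm \<Rightarrow> real) \<Rightarrow> ('n::finite \<Rightarrow> 'm \<Rightarrow> real)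
    \<Rightarrow> ('n \<Rightarrow> real) \<Rightarrow> real^'m \<Rightarrow> (nat \<Rightarrow> real^'m) \<Rightarrow> bool" where
  "analytic_family \<alpha> \<beta> \<gamma> X0 Xs \<longleftrightarrow>
     Xs 0 = X0 \<and>
     (\<exists>r>0. \<forall>t::real. \<bar>t\<bar> < r \<longrightarrow> summable (\<lambda>p. t^p *\<^sub>R Xs p)) \<and>
     (\<forall>\<^sub>F t in nhds (0::real). quadF \<alpha> \<beta> \<gamma> (\<Sum>p. t^p *\<^sub>R Xs p) = 0)"

end

theory Submission
  imports Defs
begin

text \<open>Substituting the series into \<open>F(X(t)) = 0\<close> and comparing coefficients of \<open>t^p\<close>
  (componentwise, by uniqueness of real power series expansions) gives, for \<open>p \<ge> 1\<close>,
  \<open>C X\<^sub>p = - (\<Sum>0<q<p. B(X\<^sub>q, X\<^sub>p\<^sub>-\<^sub>q))\<close>. For \<open>p = 2, 3\<close> this already solves the cases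
  \<open>(1,1)\<close> and \<open>(1,2)\<close> with \<open>2X\<^sub>2\<close> and \<open>X\<^sub>3\<close>. For \<open>p = 4\<close>, writing \<open>X\<^sub>3 = aX\<^sub>1 + bX\<^sub>2\<close> and
  using the symmetry of \<open>B\<close>, the term \<open>2B(X\<^sub>1, X\<^sub>3)\<close> is a combination of \<open>C X\<^sub>2\<close> and
  \<open>C X\<^sub>3\<close>, whence \<open>C(2X\<^sub>4 - 4aX\<^sub>2 - 2bX\<^sub>3) = -2B(X\<^sub>2, X\<^sub>2)\<close>.\<close>

lemma has_fps_expansion_unique:
  fixes F G :: "'a::{real_normed_field,banach} fps"
  assumes "f has_fps_expansion F" and "f has_fps_expansion G"
  shows "F = G"
proof (rule ccontr)
  \<comment> \<open>\<open>F - G\<close> divided by \<open>z\<^sup>n\<close>, \<open>n\<close> its subdegree, is continuous and nonzero at \<open>0\<close>,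
    but vanishes on a punctured neighbourhood of \<open>0\<close>.\<close>
  define H where "H = F - G"
  define n where "n = subdegree H"
  assume "F \<noteq> G"
  then have "H \<noteq> 0" by (simp add: H_def)
  then have "fps_nth H n \<noteq> 0" unfolding n_def by (rule nth_subdegree_nonzero)
  have "(\<lambda>z. f z - f z) has_fps_expansion H"
    unfolding H_def using assms by (rule has_fps_expansion_diff)
  then have radius: "fps_conv_radius H > 0" and zero: "\<forall>\<^sub>F z in nhds 0. eval_fps H z = 0"
    by (auto simp: has_fps_expansion_def)
  have "isCont (eval_fps (fps_shift n H)) 0"
    using radius by (intro continuous_eval_fps) (simp add: zero_ereal_def)
  moreover have "eval_fps (fps_shift n H) 0 = fps_nth H n"
    by (simp add: eval_fps_at_0)
  ultimately have "\<forall>\<^sub>F z in at 0. eval_fps (fps_shift n H) z \<noteq> 0"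
    using \<open>fps_nth H n \<noteq> 0\<close> by (metis isCont_def tendsto_imp_eventually_ne)
  moreover have "\<forall>\<^sub>F z in at 0. eval_fps (fps_shift n H) z = 0"
  proof -
    have "\<forall>\<^sub>F z in nhds 0. z \<in> eball 0 (fps_conv_radius H)"
      using radius by (intro eventually_nhds_in_open) (auto simp: zero_ereal_def)
    then have "\<forall>\<^sub>F z in nhds 0. z \<in> eball 0 (fps_conv_radius H) \<and> eval_fps H z = 0"
      using zero by (rule eventually_conj)
    then have "\<forall>\<^sub>F z in at 0. z \<noteq> 0 \<and> norm z < fps_conv_radius H \<and> eval_fps H z = 0"
      unfolding eventually_at_filter by (rule eventually_mono) simp
    then show ?thesis
      by eventually_elim (simp add: eval_fps_shift n_def)
  qed
  ultimately have "\<forall>\<^sub>F z in at (0::'a). False"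
    by eventually_elim simp
  then show False by simp
qed

definition component_fps :: "(nat \<Rightarrow> real^'m) \<Rightarrow> 'm \<Rightarrow> real fps" where
  "component_fps Xs i = Abs_fps (\<lambda>p. Xs p $ i)"

lemma analytic_family_component_has_fps_expansion:
  assumes "analytic_family \<alpha> \<beta> \<gamma> X0 Xs"
  shows "(\<lambda>t. (\<Sum>p. t^p *\<^sub>R Xs p) $ i) has_fps_expansion component_fps Xs i"
proof (rule has_fps_expansionI)
  obtain r where "r > 0" and summable: "\<And>t. \<bar>t\<bar> < r \<Longrightarrow> summable (\<lambda>p. t^p *\<^sub>R Xs p)"
    using assms unfolding analytic_family_def by blast
  have "\<forall>\<^sub>F t in nhds 0. t \<in> ball 0 r"
    using \<open>r > 0\<close> by (intro eventually_nhds_in_open) auto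
  then show "\<forall>\<^sub>F t in nhds 0.
      (\<lambda>p. fps_nth (component_fps Xs i) p * t^p) sums (\<Sum>p. t^p *\<^sub>R Xs p) $ i"
  proof eventually_elim
    case (elim t)
    then have "(\<lambda>p. t^p *\<^sub>R Xs p) sums (\<Sum>p. t^p *\<^sub>R Xs p)"
      by (intro summable_sums summable) auto
    then have "(\<lambda>p. (t^p *\<^sub>R Xs p) $ i) sums (\<Sum>p. t^p *\<^sub>R Xs p) $ i"
      by (rule bounded_linear.sums[OF bounded_linear_vec_nth])
    then show ?case by (simp add: component_fps_def mult.commute)
  qed
qed

lemma analytic_family_quadF_fps_eq_0:
  assumes fam: "analytic_family \<alpha> \<beta> \<gamma> X0 Xs"
  shows "(\<Sum>i\<in>UNIV. \<Sum>j\<in>UNIV. fps_const (\<alpha> k i j) * component_fps Xs i * component_fps Xs j)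
      + (\<Sum>i\<in>UNIV. fps_const (\<beta> k i) * component_fps Xs i) + fps_const (\<gamma> k) = 0"
proof (rule has_fps_expansion_unique)
  define x where "x t = (\<Sum>p. t^p *\<^sub>R Xs p)" for t :: real
  have component: "(\<lambda>t. x t $ i) has_fps_expansion component_fps Xs i" for i
    unfolding x_def using fam by (rule analytic_family_component_has_fps_expansion)
  show "(\<lambda>t. quadF \<alpha> \<beta> \<gamma> (x t) $ k) has_fps_expansion
      (\<Sum>i\<in>UNIV. \<Sum>j\<in>UNIV. fps_const (\<alpha> k i j) * component_fps Xs i * component_fps Xs j)
      + (\<Sum>i\<in>UNIV. fps_const (\<beta> k i) * component_fps Xs i) + fps_const (\<gamma> k)"
    unfolding quadF_def vec_lambda_beta by (intro fps_expansion_intros component)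
  have "\<forall>\<^sub>F t in nhds 0. quadF \<alpha> \<beta> \<gamma> (x t) = 0"
    using fam unfolding analytic_family_def x_def by blast
  then show "(\<lambda>t. quadF \<alpha> \<beta> \<gamma> (x t) $ k) has_fps_expansion 0"
    unfolding has_fps_expansion_def by (auto elim: eventually_mono)
qed

lemma sum_bilinB_nth:
  "(\<Sum>q\<in>Q. bilinB \<alpha> (f q) (g q)) $ k
    = (\<Sum>i\<in>UNIV. \<Sum>j\<in>UNIV. \<alpha> k i j * (\<Sum>q\<in>Q. f q $ i * g q $ j))"
proof -
  have "(\<Sum>q\<in>Q. bilinB \<alpha> (f q) (g q)) $ k
      = (\<Sum>q\<in>Q. \<Sum>i\<in>UNIV. \<Sum>j\<in>UNIV. \<alpha> k i j * (f q $ i * g q $ j))"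
    by (simp add: bilinB_def mult.assoc)
  also have "\<dots> = (\<Sum>i\<in>UNIV. \<Sum>j\<in>UNIV. \<Sum>q\<in>Q. \<alpha> k i j * (f q $ i * g q $ j))"
    by (subst sum.swap) (simp add: sum.swap[of _ Q])
  finally show ?thesis by (simp add: sum_distrib_left)
qed

lemma analytic_family_coeff_eq:
  assumes "analytic_family \<alpha> \<beta> \<gamma> X0 Xs" and "0 < p"
  shows "(\<Sum>q\<le>p. bilinB \<alpha> (Xs q) (Xs (p - q))) + linA \<beta> (Xs p) = 0"
proof -
  from arg_cong[OF analytic_family_quadF_fps_eq_0[OF assms(1)], of "\<lambda>F. fps_nth F p"]
  have "(\<Sum>i\<in>UNIV. \<Sum>j\<in>UNIV. \<alpha> k i j * (\<Sum>q\<le>p. Xs q $ i * Xs (p - q) $ j))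
      + (\<Sum>i\<in>UNIV. \<beta> k i * Xs p $ i) = 0" for k
    using \<open>0 < p\<close> by (simp only: fps_sum_nth fps_add_nth mult.assoc fps_mult_left_const_nth)
      (simp add: fps_mult_nth component_fps_def atLeast0AtMost)
  then show ?thesis
    by (simp add: vec_eq_iff sum_bilinB_nth linA_def del: sum_component)
qed

lemma bilinear_bilinB: "bilinear (bilinB \<alpha>)"
  unfolding bilinear_def
  by (auto intro!: linearI simp: bilinB_def vec_eq_iff algebra_simps sum.distrib sum_distrib_left)

lemma bilinB_commute:
  assumes "\<And>k i j. \<alpha> k i j = \<alpha> k j i"
  shows "bilinB \<alpha> X Y = bilinB \<alpha> Y X"
  unfolding bilinB_def vec_eq_iff using assms
  by (subst sum.swap) (simp add: ac_simps)

lemma linear_linC: "linear (linC \<alpha> \<beta> X0)"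
  by (rule linearI)
    (simp_all add: linC_def bilinear_ladd bilinear_radd bilinear_lmul bilinear_rmul bilinear_bilinB
      linA_def vec_eq_iff algebra_simps sum.distrib sum_distrib_left)

lemma analytic_family_linC_eq:
  assumes fam: "analytic_family \<alpha> \<beta> \<gamma> X0 Xs" and "0 < p"
  shows "linC \<alpha> \<beta> X0 (Xs p) = - (\<Sum>q\<in>{1..<p}. bilinB \<alpha> (Xs q) (Xs (p - q)))"
proof -
  have "{..p} = insert 0 (insert p {1..<p})"
    using \<open>0 < p\<close> by auto
  moreover have "Xs 0 = X0"
    using fam unfolding analytic_family_def by blast
  ultimately show ?thesis
    using analytic_family_coeff_eq[OF assms] \<open>0 < p\<close>
    by (simp add: linC_def algebra_simps eq_neg_iff_add_eq_0)
qed

lemma span_pairE: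
  assumes "z \<in> span {x, y}"
  obtains a b where "z = a *\<^sub>R x + b *\<^sub>R y"
proof -
  from assms obtain a where "z - a *\<^sub>R x \<in> span {y}"
    using span_breakdown_eq by blast
  then obtain b where "z - a *\<^sub>R x = b *\<^sub>R y"
    using span_singleton by blast
  then show ?thesis
    by (intro that[of a b]) (simp add: algebra_simps)
qed

lemma order_four_combination:
  fixes C :: "'a::real_vector \<Rightarrow> 'b::real_vector" and B :: "'a \<Rightarrow> 'a \<Rightarrow> 'b"
  assumes "linear C" and "bilinear B" and B_commute: "\<And>x y. B x y = B y x"
    and C2: "C x2 = - B x1 x1"
    and C3: "C x3 = - B x1 x2 - B x2 x1"
    and C4: "C x4 = - B x1 x3 - B x2 x2 - B x3 x1"
    and x3: "x3 = a *\<^sub>R x1 + b *\<^sub>R x2"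
  shows "C (2 *\<^sub>R x4 - (4 * a) *\<^sub>R x2 - (2 * b) *\<^sub>R x3) = - B x2 x2 - B x2 x2"
proof -
  have B13: "B x1 x3 = a *\<^sub>R B x1 x1 + b *\<^sub>R B x1 x2"
    unfolding x3 using \<open>bilinear B\<close> by (simp add: bilinear_radd bilinear_rmul)
  have C3': "C x3 = - 2 *\<^sub>R B x1 x2"
    using C3 B_commute[of x2 x1] by (simp add: scaleR_2)
  have C4': "C x4 = - 2 *\<^sub>R B x1 x3 - B x2 x2"
    using C4 B_commute[of x3 x1] by (simp add: scaleR_2)
  have "C (2 *\<^sub>R x4 - (4 * a) *\<^sub>R x2 - (2 * b) *\<^sub>R x3)
      = 2 *\<^sub>R C x4 - (4 * a) *\<^sub>R C x2 - (2 * b) *\<^sub>R C x3"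
    using \<open>linear C\<close> by (simp add: linear_diff linear_scale)
  also have "\<dots> = - 2 *\<^sub>R B x2 x2"
    unfolding C2 C3' C4' B13 by (simp add: algebra_simps)
  finally show ?thesis by (simp add: scaleR_2)
qed

theorem theorem4:
  fixes \<alpha> :: "'n::finite \<Rightarrow> 'm::finite \<Rightarrow> 'm \<Rightarrow> real"
    and \<beta> :: "'n \<Rightarrow> 'm \<Rightarrow> real" and \<gamma> :: "'n \<Rightarrow> real"
    and X0 :: "real^'m" and Xs :: "nat \<Rightarrow> real^'m"
  assumes sym: "\<And>k i j. \<alpha> k i j = \<alpha> k j i"
    and root: "quadF \<alpha> \<beta> \<gamma> X0 = 0"
    and fam: "analytic_family \<alpha> \<beta> \<gamma> X0 Xs"
    and X3: "Xs 3 \<in> span {Xs 1, Xs 2}"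
    and X4: "Xs 4 \<in> span {Xs 1, Xs 2}"
  shows "\<forall>i\<in>{1::nat,2}. \<forall>j\<in>{1::nat,2}. \<exists>X\<in>span {Xs 1, Xs 2}.
           linC \<alpha> \<beta> X0 X = - bilinB \<alpha> (Xs i) (Xs j) - bilinB \<alpha> (Xs j) (Xs i)"
proof -
  \<comment> \<open>\<open>root\<close> is the order-0 coefficient equation, already implied by \<open>fam\<close>.\<close>
  let ?B = "bilinB \<alpha>" and ?C = "linC \<alpha> \<beta> X0" and ?L = "span {Xs 1, Xs 2}"
  have B_commute: "?B X Y = ?B Y X" for X Y
    using sym by (rule bilinB_commute)
  note C_eq = analytic_family_linC_eq[OF fam]
  have C2: "?C (Xs 2) = - ?B (Xs 1) (Xs 1)"
    using C_eq[of 2] by (simp add: numeral_eq_Suc)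
  have C3: "?C (Xs 3) = - ?B (Xs 1) (Xs 2) - ?B (Xs 2) (Xs 1)"
    using C_eq[of 3] by (simp add: numeral_eq_Suc)
  have C4: "?C (Xs 4) = - ?B (Xs 1) (Xs 3) - ?B (Xs 2) (Xs 2) - ?B (Xs 3) (Xs 1)"
    using C_eq[of 4] by (simp add: numeral_eq_Suc)
  obtain a b where "Xs 3 = a *\<^sub>R Xs 1 + b *\<^sub>R Xs 2"
    using X3 by (rule span_pairE)
  then have "?C (2 *\<^sub>R Xs 4 - (4 * a) *\<^sub>R Xs 2 - (2 * b) *\<^sub>R Xs 3)
      = - ?B (Xs 2) (Xs 2) - ?B (Xs 2) (Xs 2)"
    by (rule order_four_combination[OF linear_linC bilinear_bilinB B_commute C2 C3 C4])
  moreover have "?C (Xs 2 + Xs 2) = - ?B (Xs 1) (Xs 1) - ?B (Xs 1) (Xs 1)"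
    by (simp only: linear_add[OF linear_linC] C2 diff_conv_add_uminus)
  moreover have "2 *\<^sub>R Xs 4 - (4 * a) *\<^sub>R Xs 2 - (2 * b) *\<^sub>R Xs 3 \<in> ?L" "Xs 2 + Xs 2 \<in> ?L"
    using X3 X4 span_base[of "Xs 2" "{Xs 1, Xs 2}"] by (blast intro: span_add span_diff span_scale)+
  ultimately show ?thesis
    using X3 C3 B_commute[of "Xs 2" "Xs 1"] by auto
qed

end
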